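(* Let $\mathcal{A}$ and $\mathcal{B}$ be regular languages, let $\mathcal{A}'=\{\otimes(a_1,a_2)\mid a_1,a_2\in\mathcal{A},\ |a_1|=|a_2|\}$, and let $\mathcal{B}'$ be any subset of $\otimes(\mathcal{B},\mathcal{B})=\{\otimes(b_1,b_2)\mid b_1,b_2\in\mathcal{B}\}$ which is a regular language. Let $\Lambda$ be any finite alphabet. Then $$\{\otimes(a_1b_1,\,a_2xb_2),\ \otimes(a_1yb_1,\,a_2b_2)\mid \otimes(a_1,a_2)\in\mathcal{A}',\ \otimes(b_1,b_2)\in\mathcal{B}',\ x,y\in\Lambda\}$$ is a regular language.
   Context: Convolution: for words $w_1,\dots,w_k$ over a finite alphabet and a padding symbol $\diamond$ not in the alphabet, $\otimes(w_1,\dots,w_k)$ is the word of length $\max_i|w_i|$ whose $p$-th letter is the column $(\lambda_1,\dots,\lambda_k)^T$, where $\lambda_r$ is the $p$-th letter of $w_r$ if $p\le|w_r|$ and $\diamond$ otherwise. Juxtaposition such as $a_1b_1$ denotes concatenation of words. *)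

theory Defs
  imports Main
begin

definition regular :: "'a list set \<Rightarrow> bool" where
  "regular L \<longleftrightarrow>
     (\<exists>(Q::nat set) q0 (\<delta>::nat \<Rightarrow> 'a \<Rightarrow> nat) F.
        finite Q \<and> q0 \<in> Q \<and> (\<forall>q\<in>Q. \<forall>a. \<delta> q a \<in> Q) \<and> F \<subseteq> Q \<and>
        L = {w. foldl \<delta> q0 w \<in> F})"

definition conv2 :: "'a list \<Rightarrow> 'a list \<Rightarrow> ('a option \<times> 'a option) list" where
  "conv2 w1 w2 = map (\<lambda>p. (if p < length w1 then Some (w1 ! p) else None,
                           if p < length w2 then Some (w2 ! p) else None))
                     [0..<max (length w1) (length w2)]"

end

theory Submission
  imports Defs
begin

text \<open>
  The language in question is the concatenation of the equal-length convolutions of \<open>A\<close> with the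
  languages obtained from \<open>B'\<close> by putting a letter \<open>x \<in> \<Lambda>\<close> in front of one of the two tracks;
  the equal-length prefix guarantees that the convolution splits there. Regularity is tested by left
  quotients: a language is regular iff it belongs to a finite family of languages closed under
  quotients by letters, and it suffices that every quotient of a member of a finite family be a
  union of members (a nondeterministic automaton). Putting a letter in front of one track shifts
  that track by one position, so a quotient only has to remember the one pending letter.
\<close>

section \<open>Regularity via left quotients\<close>

definition lquot :: "'a \<Rightarrow> 'a list set \<Rightarrow> 'a list set" where
  "lquot a L = {w. a # w \<in> L}"

lemma foldl_lquot: "foldl (\<lambda>X a. lquot a X) L u = {w. u @ w \<in> L}"
  by (induction u arbitrary: L) (simp_all add: lquot_def)

lemma regular_dfa:
  fixes Q :: "'q set" and \<delta> :: "'q \<Rightarrow> 'a \<Rightarrow> 'q"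
  assumes "finite Q" and "q0 \<in> Q" and "\<And>q a. q \<in> Q \<Longrightarrow> \<delta> q a \<in> Q"
  shows "regular {w. foldl \<delta> q0 w \<in> F}"
proof -
  obtain f :: "'q \<Rightarrow> nat" where inj: "inj_on f Q"
    using finite_imp_inj_to_nat_seg[OF \<open>finite Q\<close>] by blast
  define g where "g = inv_into Q f"
  define \<delta>' where "\<delta>' i a = f (\<delta> (g i) a)" for i a
  have foldl_\<delta>': "foldl \<delta>' (f q) w = f (foldl \<delta> q w)" if "q \<in> Q" for q w
    using that by (induction w arbitrary: q) (simp_all add: \<delta>'_def g_def inj assms(3))
  have foldl_Q: "foldl \<delta> q w \<in> Q" if "q \<in> Q" for q w
    using that by (induction w arbitrary: q) (simp_all add: assms(3))
  show ?thesis
    unfolding regular_def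
  proof (intro exI conjI)
    show "finite (f ` Q)" "f q0 \<in> f ` Q" "f ` (F \<inter> Q) \<subseteq> f ` Q"
      using \<open>finite Q\<close> \<open>q0 \<in> Q\<close> by auto
    show "\<forall>i\<in>f ` Q. \<forall>a. \<delta>' i a \<in> f ` Q"
      by (auto simp: \<delta>'_def g_def inj assms(3))
    show "{w. foldl \<delta> q0 w \<in> F} = {w. foldl \<delta>' (f q0) w \<in> f ` (F \<inter> Q)}"
      using foldl_\<delta>'[OF \<open>q0 \<in> Q\<close>] foldl_Q[OF \<open>q0 \<in> Q\<close>] inj
      by (auto simp: inj_on_image_mem_iff)
  qed
qed

lemma regular_iff_lquot_closed:
  "regular L \<longleftrightarrow> (\<exists>Q. finite Q \<and> L \<in> Q \<and> (\<forall>X\<in>Q. \<forall>a. lquot a X \<in> Q))"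
proof
  assume "regular L"
  then obtain Q q0 \<delta> F where "finite (Q::nat set)" "q0 \<in> Q" "\<forall>q\<in>Q. \<forall>a. \<delta> q a \<in> Q"
    and L: "L = {w. foldl \<delta> q0 w \<in> F}"
    unfolding regular_def by blast
  define lang where "lang q = {w. foldl \<delta> q w \<in> F}" for q
  have lquot_lang: "lquot a (lang q) = lang (\<delta> q a)" for a q
    by (simp add: lquot_def lang_def)
  show "\<exists>Q. finite Q \<and> L \<in> Q \<and> (\<forall>X\<in>Q. \<forall>a. lquot a X \<in> Q)"
  proof (intro exI conjI ballI allI)
    show "finite (lang ` Q)" "L \<in> lang ` Q"
      using \<open>finite Q\<close> \<open>q0 \<in> Q\<close> by (auto simp: L lang_def)
    fix X a assume "X \<in> lang ` Q"
    then show "lquot a X \<in> lang ` Q"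
      using \<open>\<forall>q\<in>Q. \<forall>a. \<delta> q a \<in> Q\<close> by (auto simp: lquot_lang)
  qed
next
  assume "\<exists>Q. finite Q \<and> L \<in> Q \<and> (\<forall>X\<in>Q. \<forall>a. lquot a X \<in> Q)"
  then obtain Q where "finite Q" "L \<in> Q" "\<And>X a. X \<in> Q \<Longrightarrow> lquot a X \<in> Q" by blast
  then have "regular {w. foldl (\<lambda>X a. lquot a X) L w \<in> {X. [] \<in> X}}"
    by (intro regular_dfa)
  then show "regular L" by (simp add: foldl_lquot)
qed

lemma regular_lquot_closedE:
  assumes "regular L"
  obtains Q where "finite Q" "L \<in> Q" "\<And>X a. X \<in> Q \<Longrightarrow> lquot a X \<in> Q"
  using assms unfolding regular_iff_lquot_closed by blast

lemma lquot_Union: "lquot a (\<Union>S) = (\<Union>X\<in>S. lquot a X)"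
  by (auto simp: lquot_def)

lemma lquot_Int_lists: "lquot l (L \<inter> lists S) = (if l \<in> S then lquot l L \<inter> lists S else {})"
  by (auto simp: lquot_def)

lemma Union_mem_Union_Pow:
  assumes "S \<subseteq> Union ` Pow FF"
  shows "\<Union>S \<in> Union ` Pow FF"
proof
  show "{Y\<in>FF. Y \<subseteq> \<Union>S} \<in> Pow FF" by simp
  show "\<Union>S = \<Union>{Y\<in>FF. Y \<subseteq> \<Union>S}"
  proof (intro equalityI subsetI)
    fix x assume "x \<in> \<Union>S"
    then obtain X where "X \<in> S" "x \<in> X" by blast
    moreover obtain T where "T \<subseteq> FF" "X = \<Union>T"
      using assms \<open>X \<in> S\<close> by blast
    ultimately show "x \<in> \<Union>{Y\<in>FF. Y \<subseteq> \<Union>S}" by blast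
  qed blast
qed

lemma Union_in_Union_Pow: "T \<subseteq> FF \<Longrightarrow> \<Union>T \<in> Union ` Pow FF"
  by blast

text \<open>\<open>FF\<close> is the state set of a nondeterministic automaton and \<open>Union ` Pow FF\<close> its subset
  construction.\<close>

lemma regular_Union_of_lquot_closed_family:
  assumes "finite FF" and "\<And>X a. X \<in> FF \<Longrightarrow> lquot a X \<in> Union ` Pow FF" and "S \<subseteq> FF"
  shows "regular (\<Union>S)"
  unfolding regular_iff_lquot_closed
proof (intro exI conjI ballI allI)
  show "finite (Union ` Pow FF)" using \<open>finite FF\<close> by simp
  show "\<Union>S \<in> Union ` Pow FF" using \<open>S \<subseteq> FF\<close> by blast
  fix X a assume "X \<in> Union ` Pow FF"
  then obtain T where "T \<subseteq> FF" "X = \<Union>T" by blast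
  then have "lquot a X = \<Union>(lquot a ` T)" by (simp add: lquot_Union)
  moreover have "lquot a ` T \<subseteq> Union ` Pow FF" using \<open>T \<subseteq> FF\<close> assms(2) by blast
  ultimately show "lquot a X \<in> Union ` Pow FF" by (simp add: Union_mem_Union_Pow)
qed

lemma regular_Union:
  assumes "finite \<L>" and "\<And>L. L \<in> \<L> \<Longrightarrow> regular L"
  shows "regular (\<Union>\<L>)"
proof -
  have "\<forall>L\<in>\<L>. \<exists>Q. finite Q \<and> L \<in> Q \<and> (\<forall>X\<in>Q. \<forall>a. lquot a X \<in> Q)"
    using assms(2) unfolding regular_iff_lquot_closed by blast
  then obtain Q where Q: "\<And>L. L \<in> \<L> \<Longrightarrow> finite (Q L) \<and> L \<in> Q L \<and> (\<forall>X\<in>Q L. \<forall>a. lquot a X \<in> Q L)"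
    by (metis bchoice)
  show ?thesis
  proof (rule regular_Union_of_lquot_closed_family)
    show "finite (\<Union>(Q ` \<L>))" using assms(1) Q by simp
    show "\<L> \<subseteq> \<Union>(Q ` \<L>)" using Q by blast
    fix X a assume "X \<in> \<Union>(Q ` \<L>)"
    then have "{lquot a X} \<subseteq> \<Union>(Q ` \<L>)" using Q by blast
    then show "lquot a X \<in> Union ` Pow (\<Union>(Q ` \<L>))" by blast
  qed
qed

lemma regular_Un:
  assumes "regular L1" and "regular L2"
  shows "regular (L1 \<union> L2)"
proof -
  have "regular (\<Union>{L1, L2})" by (rule regular_Union) (use assms in auto)
  then show ?thesis by simp
qed

lemma regular_vimage_map:
  assumes "regular L"
  shows "regular {w. map h w \<in> L}"
proof -
  obtain Q q0 \<delta> F where dfa: "finite (Q::nat set)" "q0 \<in> Q" "\<forall>q\<in>Q. \<forall>a. \<delta> q a \<in> Q" "F \<subseteq> Q"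
    and L: "L = {w. foldl \<delta> q0 w \<in> F}"
    using assms unfolding regular_def by blast
  have "{w. map h w \<in> L} = {w. foldl (\<lambda>q a. \<delta> q (h a)) q0 w \<in> F}"
    by (simp add: L foldl_map)
  with dfa show ?thesis
    unfolding regular_def by (intro exI[of _ Q] exI[of _ q0] exI[of _ "\<lambda>q a. \<delta> q (h a)"] exI[of _ F]) simp
qed

definition conc :: "'a list set \<Rightarrow> 'a list set \<Rightarrow> 'a list set" where
  "conc P M = {u @ v | u v. u \<in> P \<and> v \<in> M}"

lemma lquot_conc: "lquot a (conc P M) = conc (lquot a P) M \<union> (if [] \<in> P then lquot a M else {})"
  by (auto simp: lquot_def conc_def Cons_eq_append_conv)

lemma regular_conc:
  assumes "regular P" and "regular M"
  shows "regular (conc P M)"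
proof -
  obtain QP where QP: "finite QP" "P \<in> QP" "\<And>X a. X \<in> QP \<Longrightarrow> lquot a X \<in> QP"
    using assms(1) by (meson regular_lquot_closedE)
  obtain QM where QM: "finite QM" "M \<in> QM" "\<And>X a. X \<in> QM \<Longrightarrow> lquot a X \<in> QM"
    using assms(2) by (meson regular_lquot_closedE)
  let ?FF = "(\<lambda>X. conc X M) ` QP \<union> QM"
  have "regular (\<Union>{conc P M})"
  proof (rule regular_Union_of_lquot_closed_family)
    show "finite ?FF" using QP QM by simp
    show "{conc P M} \<subseteq> ?FF" using QP by blast
    fix Y a assume "Y \<in> ?FF"
    then consider X where "X \<in> QP" "Y = conc X M" | "Y \<in> QM" by blast
    then show "lquot a Y \<in> Union ` Pow ?FF"
    proof cases
      case 1
      have "lquot a Y = \<Union>({conc (lquot a X) M} \<union> (if [] \<in> X then {lquot a M} else {}))"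
        using 1 by (simp add: lquot_conc)
      moreover have "{conc (lquot a X) M} \<union> (if [] \<in> X then {lquot a M} else {}) \<subseteq> ?FF"
        using 1 QP QM by auto
      ultimately show ?thesis by blast
    next
      case 2
      then have "{lquot a Y} \<subseteq> ?FF" using QM by blast
      then show ?thesis by blast
    qed
  qed
  then show ?thesis by simp
qed

section \<open>Convolution of two words\<close>

lemma conv2_Nil_Nil [simp]: "conv2 [] [] = []"
  by (simp add: conv2_def)

lemma conv2_Cons_Nil [simp]: "conv2 (a # x) [] = (Some a, None) # conv2 x []"
  by (simp add: conv2_def upt_conv_Cons map_Suc_upt[symmetric] del: upt_Suc)

lemma conv2_Nil_Cons [simp]: "conv2 [] (b # y) = (None, Some b) # conv2 [] y"
  by (simp add: conv2_def upt_conv_Cons map_Suc_upt[symmetric] del: upt_Suc)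

lemma conv2_Cons_Cons [simp]: "conv2 (a # x) (b # y) = (Some a, Some b) # conv2 x y"
  by (simp add: conv2_def upt_conv_Cons map_Suc_upt[symmetric] del: upt_Suc)

lemma conv2_Nil_right: "conv2 x [] = map (\<lambda>a. (Some a, None)) x"
  by (induction x) simp_all

lemma conv2_Nil_left: "conv2 [] y = map (\<lambda>b. (None, Some b)) y"
  by (induction y) simp_all

lemma map_fst_conv2: "map the (filter (\<lambda>z. z \<noteq> None) (map fst (conv2 x y))) = x"
  by (induction x y rule: list_induct2') (simp_all add: conv2_Nil_left conv2_Nil_right comp_def)

lemma map_snd_conv2: "map the (filter (\<lambda>z. z \<noteq> None) (map snd (conv2 x y))) = y"
  by (induction x y rule: list_induct2') (simp_all add: conv2_Nil_left conv2_Nil_right comp_def)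

lemma conv2_inject [simp]: "conv2 x y = conv2 x' y' \<longleftrightarrow> x = x' \<and> y = y'"
  by (metis map_fst_conv2 map_snd_conv2)

lemma conv2_append:
  "length x = length y \<Longrightarrow> conv2 (x @ x') (y @ y') = conv2 x y @ conv2 x' y'"
  by (induction x y rule: list_induct2) simp_all

lemma map_swap_conv2: "map prod.swap (conv2 x y) = conv2 y x"
  by (induction x y rule: list_induct2') (simp_all add: conv2_Nil_left conv2_Nil_right)

definition conv_eqlen :: "'a list set \<Rightarrow> 'a list set \<Rightarrow> ('a option \<times> 'a option) list set" where
  "conv_eqlen A1 A2 = {conv2 x y | x y. x \<in> A1 \<and> y \<in> A2 \<and> length x = length y}"

lemma conv2_mem_conv_eqlen [simp]:
  "conv2 x y \<in> conv_eqlen A1 A2 \<longleftrightarrow> x \<in> A1 \<and> y \<in> A2 \<and> length x = length y"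
  by (auto simp: conv_eqlen_def)

lemma lquot_conv_eqlen_Some:
  "lquot (Some a, Some b) (conv_eqlen A1 A2) = conv_eqlen (lquot a A1) (lquot b A2)"
proof (intro equalityI subsetI)
  fix w assume "w \<in> lquot (Some a, Some b) (conv_eqlen A1 A2)"
  then obtain x y where xy: "(Some a, Some b) # w = conv2 x y" "x \<in> A1" "y \<in> A2" "length x = length y"
    by (auto simp: lquot_def conv_eqlen_def)
  then obtain x' y' where "x = a # x'" "y = b # y'" "w = conv2 x' y'"
    by (cases x; cases y) auto
  with xy show "w \<in> conv_eqlen (lquot a A1) (lquot b A2)"
    by (auto simp: lquot_def conv_eqlen_def)
next
  fix w assume "w \<in> conv_eqlen (lquot a A1) (lquot b A2)"
  then obtain x y where "w = conv2 x y" "a # x \<in> A1" "b # y \<in> A2" "length x = length y"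
    by (auto simp: lquot_def conv_eqlen_def)
  then show "w \<in> lquot (Some a, Some b) (conv_eqlen A1 A2)"
    unfolding lquot_def conv_eqlen_def by (intro CollectI exI[of _ "a # x"] exI[of _ "b # y"]) simp
qed

lemma lquot_conv_eqlen_None:
  assumes "fst l = None \<or> snd l = None"
  shows "lquot l (conv_eqlen A1 A2) = {}"
proof -
  have False if "l # w = conv2 x y" "length x = length y" for w x y
    using that assms by (cases x; cases y) auto
  then show ?thesis by (auto simp: lquot_def conv_eqlen_def)
qed

lemma regular_conv_eqlen:
  assumes "regular A1" and "regular A2"
  shows "regular (conv_eqlen A1 A2)"
proof -
  obtain Q1 where Q1: "finite Q1" "A1 \<in> Q1" "\<And>X a. X \<in> Q1 \<Longrightarrow> lquot a X \<in> Q1"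
    using assms(1) by (meson regular_lquot_closedE)
  obtain Q2 where Q2: "finite Q2" "A2 \<in> Q2" "\<And>X a. X \<in> Q2 \<Longrightarrow> lquot a X \<in> Q2"
    using assms(2) by (meson regular_lquot_closedE)
  let ?Q = "insert {} ((\<lambda>(X1, X2). conv_eqlen X1 X2) ` (Q1 \<times> Q2))"
  show ?thesis
    unfolding regular_iff_lquot_closed
  proof (intro exI conjI ballI allI)
    show "finite ?Q" using Q1 Q2 by simp
    show "conv_eqlen A1 A2 \<in> ?Q" using Q1 Q2 by blast
    fix X l assume "X \<in> ?Q"
    then consider "X = {}" | X1 X2 where "X1 \<in> Q1" "X2 \<in> Q2" "X = conv_eqlen X1 X2" by blast
    then show "lquot l X \<in> ?Q"
    proof cases
      case 1 then show ?thesis by (simp add: lquot_def)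
    next
      case 2
      show ?thesis
      proof (cases "\<exists>a b. l = (Some a, Some b)")
        case True
        then obtain a b where "l = (Some a, Some b)" by blast
        then show ?thesis using 2 Q1(3) Q2(3) by (auto simp: lquot_conv_eqlen_Some)
      next
        case False
        then have "fst l = None \<or> snd l = None" by (cases l) auto
        then show ?thesis using 2 by (simp add: lquot_conv_eqlen_None)
      qed
    qed
  qed
qed

section \<open>Putting a letter in front of one track\<close>

definition cons_snd :: "('a option \<times> 'a option) list set \<Rightarrow> 'a \<Rightarrow> ('a option \<times> 'a option) list set" where
  "cons_snd L c = {conv2 x (c # y) | x y. conv2 x y \<in> L}"

definition cons_fst :: "('a option \<times> 'a option) list set \<Rightarrow> 'a \<Rightarrow> ('a option \<times> 'a option) list set" where
  "cons_fst L c = {conv2 (c # x) y | x y. conv2 x y \<in> L}"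

lemma lquot_cons_snd_mismatch: "snd l \<noteq> Some c \<Longrightarrow> lquot l (cons_snd L c) = {}"
proof -
  assume l: "snd l \<noteq> Some c"
  have False if "l # w = conv2 x (c # y)" for w x y
    using that l by (cases x) auto
  then show ?thesis by (auto simp: lquot_def cons_snd_def)
qed

lemma lquot_cons_snd_None:
  "lquot (None, Some c) (cons_snd L c) = L \<inter> lists (range (\<lambda>b. (None, Some b)))"
proof (intro equalityI subsetI)
  fix w assume "w \<in> lquot (None, Some c) (cons_snd L c)"
  then obtain x y where "(None, Some c) # w = conv2 x (c # y)" "conv2 x y \<in> L"
    by (auto simp: lquot_def cons_snd_def)
  then show "w \<in> L \<inter> lists (range (\<lambda>b. (None, Some b)))"
    by (cases x) (auto simp: conv2_Nil_left)
next
  fix w assume "w \<in> L \<inter> lists (range (\<lambda>b. (None, Some b)))"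
  then obtain y where "w = conv2 [] y" "conv2 [] y \<in> L"
    by (auto simp: lists_image conv2_Nil_left)
  then show "w \<in> lquot (None, Some c) (cons_snd L c)"
    unfolding lquot_def cons_snd_def by (intro CollectI exI[of _ "[]"] exI[of _ y]) simp
qed

lemma lquot_cons_snd_Some:
  "lquot (Some a, Some c) (cons_snd L c) =
     lquot (Some a, None) L \<inter> lists (range (\<lambda>b. (Some b, None))) \<union>
     (\<Union>d. cons_snd (lquot (Some a, Some d) L) d)"
proof (intro equalityI subsetI)
  fix w assume "w \<in> lquot (Some a, Some c) (cons_snd L c)"
  then obtain x y where xy: "(Some a, Some c) # w = conv2 x (c # y)" "conv2 x y \<in> L"
    by (auto simp: lquot_def cons_snd_def)
  then obtain x' where x: "x = a # x'" and w: "w = conv2 x' y" by (cases x) auto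
  show "w \<in> lquot (Some a, None) L \<inter> lists (range (\<lambda>b. (Some b, None))) \<union>
             (\<Union>d. cons_snd (lquot (Some a, Some d) L) d)"
  proof (cases y)
    case Nil
    then show ?thesis using xy x w by (auto simp: lquot_def conv2_Nil_right)
  next
    case (Cons d y')
    then have "w \<in> cons_snd (lquot (Some a, Some d) L) d"
      using xy x w unfolding lquot_def cons_snd_def by auto
    then show ?thesis by blast
  qed
next
  fix w assume "w \<in> lquot (Some a, None) L \<inter> lists (range (\<lambda>b. (Some b, None))) \<union>
                     (\<Union>d. cons_snd (lquot (Some a, Some d) L) d)"
  then show "w \<in> lquot (Some a, Some c) (cons_snd L c)"
  proof (elim UnE)
    assume "w \<in> (\<Union>d. cons_snd (lquot (Some a, Some d) L) d)"
    then obtain d x y where "w = conv2 x (d # y)" "conv2 (a # x) (d # y) \<in> L"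
      by (auto simp: lquot_def cons_snd_def)
    then show ?thesis
      unfolding lquot_def cons_snd_def by (intro CollectI exI[of _ "a # x"] exI[of _ "d # y"]) simp
  next
    assume "w \<in> lquot (Some a, None) L \<inter> lists (range (\<lambda>b. (Some b, None)))"
    then obtain x where "w = conv2 x []" "conv2 (a # x) [] \<in> L"
      by (auto simp: lquot_def lists_image conv2_Nil_right)
    then show ?thesis
      unfolding lquot_def cons_snd_def by (intro CollectI exI[of _ "a # x"] exI[of _ "[]"]) simp
  qed
qed

text \<open>Reading \<open>(a, d)\<close> from \<open>cons_snd D c\<close> consumes the pending letter \<open>c\<close> and makes \<open>d\<close>
  pending; once one track of the underlying word is exhausted only the other one continues, which
  is what the intersections with \<open>lists\<close> record.\<close>

definition cons_snd_states :: "('a option \<times> 'a option) list set set \<Rightarrow> ('a option \<times> 'a option) list set set" where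
  "cons_snd_states Q =
     (\<lambda>(D, d). cons_snd D d) ` (Q \<times> UNIV) \<union>
     (\<lambda>D. D \<inter> lists (range (\<lambda>b. (Some b, None)))) ` Q \<union>
     (\<lambda>D. D \<inter> lists (range (\<lambda>b. (None, Some b)))) ` Q"

lemma cons_snd_mem_states: "D \<in> Q \<Longrightarrow> cons_snd D d \<in> cons_snd_states Q"
  unfolding cons_snd_states_def by (intro UnI1 image_eqI[where x="(D, d)"]) simp_all

lemma Int_lists_mem_states:
  assumes "D \<in> Q"
  shows "D \<inter> lists (range (\<lambda>b. (Some b, None))) \<in> cons_snd_states Q"
    and "D \<inter> lists (range (\<lambda>b. (None, Some b))) \<in> cons_snd_states Q"
  using assms unfolding cons_snd_states_def by blast+

lemma lquot_Int_lists_mem_Union_Pow: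
  assumes "\<And>D l. D \<in> Q \<Longrightarrow> lquot l D \<in> Q" and "\<And>D. D \<in> Q \<Longrightarrow> D \<inter> lists P \<in> S" and "D \<in> Q"
  shows "lquot l (D \<inter> lists P) \<in> Union ` Pow S"
proof -
  have "lquot l (D \<inter> lists P) = \<Union>(if l \<in> P then {lquot l D \<inter> lists P} else {})"
    by (simp add: lquot_Int_lists)
  moreover have "(if l \<in> P then {lquot l D \<inter> lists P} else {}) \<subseteq> S"
    using assms by simp
  ultimately show ?thesis by (simp only: Union_in_Union_Pow)
qed

lemma lquot_cons_snd_mem_states:
  assumes closed: "\<And>D l. D \<in> Q \<Longrightarrow> lquot l D \<in> Q" and "D \<in> Q"
  shows "lquot l (cons_snd D d) \<in> Union ` Pow (cons_snd_states Q)"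
proof -
  consider "snd l \<noteq> Some d" | "l = (None, Some d)" | a where "l = (Some a, Some d)"
    by (cases l) (metis not_None_eq snd_conv)
  then show ?thesis
  proof cases
    case 1
    then have "lquot l (cons_snd D d) = \<Union>{}" by (simp add: lquot_cons_snd_mismatch)
    then show ?thesis by (simp only: Union_in_Union_Pow empty_subsetI)
  next
    case 2
    then have "lquot l (cons_snd D d) = \<Union>{D \<inter> lists (range (\<lambda>b. (None, Some b)))}"
      by (simp add: lquot_cons_snd_None)
    moreover have "{D \<inter> lists (range (\<lambda>b. (None, Some b)))} \<subseteq> cons_snd_states Q"
      using \<open>D \<in> Q\<close> Int_lists_mem_states by simp
    ultimately show ?thesis by (simp only: Union_in_Union_Pow)
  next
    case (3 a)
    let ?T = "insert (lquot (Some a, None) D \<inter> lists (range (\<lambda>b. (Some b, None))))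
                (range (\<lambda>e. cons_snd (lquot (Some a, Some e) D) e))"
    from 3 have "lquot l (cons_snd D d) = \<Union>?T"
      by (simp add: lquot_cons_snd_Some)
    moreover have "?T \<subseteq> cons_snd_states Q"
      using \<open>D \<in> Q\<close> by (auto intro!: cons_snd_mem_states Int_lists_mem_states closed)
    ultimately show ?thesis by (simp only: Union_in_Union_Pow)
  qed
qed

lemma lquot_cons_snd_states:
  assumes closed: "\<And>D l. D \<in> Q \<Longrightarrow> lquot l D \<in> Q" and "X \<in> cons_snd_states Q"
  shows "lquot l X \<in> Union ` Pow (cons_snd_states Q)"
proof -
  from \<open>X \<in> cons_snd_states Q\<close> consider D d where "D \<in> Q" "X = cons_snd D d"
    | D where "D \<in> Q" "X = D \<inter> lists (range (\<lambda>b. (Some b, None)))"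
    | D where "D \<in> Q" "X = D \<inter> lists (range (\<lambda>b. (None, Some b)))"
    unfolding cons_snd_states_def by (elim UnE imageE) auto
  then show ?thesis
  proof cases
    case 1
    then show ?thesis using lquot_cons_snd_mem_states[OF closed] by simp
  qed (simp_all add: lquot_Int_lists_mem_Union_Pow[OF closed] Int_lists_mem_states)
qed

lemma regular_cons_snd:
  fixes L :: "('a::finite option \<times> 'a option) list set"
  assumes "regular L"
  shows "regular (cons_snd L c)"
proof -
  obtain Q where Q: "finite Q" "L \<in> Q" "\<And>X l. X \<in> Q \<Longrightarrow> lquot l X \<in> Q"
    using assms by (meson regular_lquot_closedE)
  have "regular (\<Union>{cons_snd L c})"
  proof (rule regular_Union_of_lquot_closed_family)
    show "finite (cons_snd_states Q)" using Q(1) by (simp add: cons_snd_states_def)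
    show "{cons_snd L c} \<subseteq> cons_snd_states Q" using Q(2) by (auto simp: cons_snd_states_def)
  qed (intro lquot_cons_snd_states Q(3))
  then show ?thesis by simp
qed

lemma cons_fst_eq_swap_cons_snd:
  "cons_fst L c = {w. map prod.swap w \<in> cons_snd {w. map prod.swap w \<in> L} c}"
proof (intro equalityI subsetI)
  fix w assume "w \<in> cons_fst L c"
  then obtain x y where "w = conv2 (c # x) y" "conv2 x y \<in> L"
    by (auto simp: cons_fst_def)
  then show "w \<in> {w. map prod.swap w \<in> cons_snd {w. map prod.swap w \<in> L} c}"
    unfolding cons_snd_def by (auto simp: map_swap_conv2)
next
  fix w assume "w \<in> {w. map prod.swap w \<in> cons_snd {w. map prod.swap w \<in> L} c}"
  then obtain x y where "map prod.swap w = conv2 x (c # y)" "conv2 y x \<in> L"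
    by (auto simp: cons_snd_def map_swap_conv2)
  then have "w = conv2 (c # y) x" "conv2 y x \<in> L"
    by (metis list.map_comp map_idI map_swap_conv2 swap_comp_swap id_apply)+
  then show "w \<in> cons_fst L c" by (auto simp: cons_fst_def)
qed

lemma regular_cons_fst:
  fixes L :: "('a::finite option \<times> 'a option) list set"
  assumes "regular L"
  shows "regular (cons_fst L c)"
  unfolding cons_fst_eq_swap_cons_snd
  by (intro regular_vimage_map regular_cons_snd assms)

lemma conv2_insert_letter_eq_conc:
  "{w. \<exists>a1 a2 b1 b2 x y. conv2 a1 a2 \<in> conv_eqlen A1 A2 \<and> conv2 b1 b2 \<in> L \<and> x \<in> \<Lambda> \<and> y \<in> \<Lambda> \<and>
      (w = conv2 (a1 @ b1) (a2 @ [x] @ b2) \<or> w = conv2 (a1 @ [y] @ b1) (a2 @ b2))}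
   = conc (conv_eqlen A1 A2) (\<Union>x\<in>\<Lambda>. cons_snd L x \<union> cons_fst L x)"
  (is "?lhs = conc ?E ?R")
proof (intro equalityI subsetI)
  fix w assume "w \<in> ?lhs"
  then obtain a1 a2 b1 b2 x y where ab: "conv2 a1 a2 \<in> ?E" "conv2 b1 b2 \<in> L" "x \<in> \<Lambda>" "y \<in> \<Lambda>"
    and w: "w = conv2 (a1 @ b1) (a2 @ [x] @ b2) \<or> w = conv2 (a1 @ [y] @ b1) (a2 @ b2)"
    by blast
  then have "length a1 = length a2" by simp
  with w have "w = conv2 a1 a2 @ conv2 b1 (x # b2) \<or> w = conv2 a1 a2 @ conv2 (y # b1) b2"
    by (simp add: conv2_append)
  moreover have "conv2 b1 (x # b2) \<in> ?R" "conv2 (y # b1) b2 \<in> ?R"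
    using ab unfolding cons_snd_def cons_fst_def by blast+
  ultimately show "w \<in> conc ?E ?R"
    using ab(1) unfolding conc_def by blast
next
  fix w assume "w \<in> conc ?E ?R"
  then obtain a1 a2 v where a: "a1 \<in> A1" "a2 \<in> A2" "length a1 = length a2"
    and v: "v \<in> ?R" and w: "w = conv2 a1 a2 @ v"
    unfolding conc_def conv_eqlen_def by blast
  from v obtain x b1 b2 where "x \<in> \<Lambda>" "conv2 b1 b2 \<in> L"
    and "v = conv2 b1 (x # b2) \<or> v = conv2 (x # b1) b2"
    unfolding cons_snd_def cons_fst_def by blast
  with a(3) w have "w = conv2 (a1 @ b1) (a2 @ [x] @ b2) \<or> w = conv2 (a1 @ [x] @ b1) (a2 @ b2)"
    by (auto simp: conv2_append)
  moreover have "conv2 a1 a2 \<in> ?E" using a by simp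
  ultimately show "w \<in> ?lhs"
    using \<open>x \<in> \<Lambda>\<close> \<open>conv2 b1 b2 \<in> L\<close> by blast
qed

theorem lemma3p5:
  fixes A B :: "('a::finite) list set"
    and B' :: "('a option \<times> 'a option) list set"
    and \<Lambda> :: "'a set"
  assumes "regular A" and "regular B"
    and "B' \<subseteq> {conv2 b1 b2 | b1 b2. b1 \<in> B \<and> b2 \<in> B}"
    and "regular B'"
  defines "A' \<equiv> {conv2 a1 a2 | a1 a2. a1 \<in> A \<and> a2 \<in> A \<and> length a1 = length a2}"
  shows "regular {w. \<exists>a1 a2 b1 b2 x y.
                    conv2 a1 a2 \<in> A' \<and> conv2 b1 b2 \<in> B' \<and> x \<in> \<Lambda> \<and> y \<in> \<Lambda> \<and>
                    (w = conv2 (a1 @ b1) (a2 @ [x] @ b2) \<or>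
                     w = conv2 (a1 @ [y] @ b1) (a2 @ b2))}"
proof -
  have A': "A' = conv_eqlen A A" unfolding A'_def conv_eqlen_def ..
  have "regular (\<Union>x\<in>\<Lambda>. cons_snd B' x \<union> cons_fst B' x)"
    by (intro regular_Union finite_imageI finite)
      (auto intro: regular_Un regular_cons_snd regular_cons_fst \<open>regular B'\<close>)
  then show ?thesis
    unfolding A' conv2_insert_letter_eq_conc
    by (intro regular_conc regular_conv_eqlen \<open>regular A\<close>)
qed

end
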